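(* Let $\mathcal{B}\subseteq\mathcal{C}^n$ be $f$-closed for all $f\in\mathbb{R}^n\setminus\mathbb{Z}^n$, and let $L\in\mathcal{C}^n$ be a polyhedron given by $L=\operatorname{conv}(V)+\operatorname{cone}(W)$, where $V$ is a nonempty finite subset of $\mathbb{R}^n$ and $W$ is a finite (possibly empty) subset of $\mathbb{R}^n\setminus\{0\}$. Then \[\frac{1}{|V|+|W|+1}\sup_{f\in\mathbb{R}^n\setminus\mathbb{Z}^n}\inf_{B\in\mathcal{B}}\rho_f(B,L)\le\rho(\mathcal{B},L)\le\sup_{f\in\mathbb{R}^n\setminus\mathbb{Z}^n}\inf_{B\in\mathcal{B}}\rho_f(B,L).\]
   Context: $\mathcal{C}^n$ is the family of all $n$-dimensional closed convex subsets of $\mathbb{R}^n$. For $B\in\mathcal{C}^n$ with $0\in\operatorname{int}(B)$, $\psi_B(r)=\inf\{\lambda>0:r\in\lambda B\}$. For $k\in\mathbb{N}$, $R=(r_1,\dots,r_k)\in\mathbb{R}^{n\times k}$, $f\in\mathbb{R}^n\setminus\mathbb{Z}^n$, $B\in\mathcal{C}^n$: if $f\in\operatorname{int}(B)$, $C_B(R,f)=\{s\in\mathbb{R}^k_{\ge0}:\sum_j s_j\psi_{B-f}(r_j)\ge1\}$, otherwise $C_B(R,f)=\mathbb{R}^k_{\ge0}$; $C_{\mathcal{B}}(R,f)=\bigcap_{B\in\mathcal{B}}C_B(R,f)$ ($=\mathbb{R}^k_{\ge0}$ if $\mathcal{B}=\emptyset$). $\rho_f(B,L)=\inf\{\alpha>0:C_B(R,f)\subseteq\frac1\alpha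 C_L(R,f)$ for all $k$, $R\}$; $\rho_f(\mathcal{B},L)=\inf\{\alpha>0:C_{\mathcal{B}}(R,f)\subseteq\frac1\alpha C_L(R,f)$ for all $k$, $R\}$; $\rho(\mathcal{B},L)=\sup_{f\in\mathbb{R}^n\setminus\mathbb{Z}^n}\rho_f(\mathcal{B},L)$. $\mathcal{B}_f$ denotes the sets of $\mathcal{B}$ containing $f$ in the interior, $\mathcal{C}^n_f$ likewise. $\mathcal{B}$ is $f$-closed if whenever $B_t\in\mathcal{B}_f$, $C\in\mathcal{C}^n_f$ and $\psi_{B_t-f}\to\psi_{C-f}$ pointwise, then $C\in\mathcal{B}_f$. *)

theory Defs
  imports "HOL-Analysis.Analysis"
begin

definition int_points :: "(real^'n) set" where
  "int_points = {x. \<forall>i. x $ i \<in> \<int>}"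

definition convex_bodies :: "(real^'n) set set" where
  "convex_bodies = {C. closed C \<and> convex C \<and> aff_dim C = int DIM(real^'n)}"

definition gauge_fn :: "(real^'n) set \<Rightarrow> real^'n \<Rightarrow> real" where
  "gauge_fn B r = Inf {l. l > 0 \<and> r \<in> (\<lambda>x. l *\<^sub>R x) ` B}"

definition transl :: "(real^'n) set \<Rightarrow> real^'n \<Rightarrow> (real^'n) set" where
  "transl B f = (\<lambda>x. x - f) ` B"

text \<open>R^k_{\<ge>0}, vectors s represented as nat \<Rightarrow> real with support in {..<k}.\<close>
definition nonneg_orthant :: "nat \<Rightarrow> (nat \<Rightarrow> real) set" where
  "nonneg_orthant k = {s. (\<forall>j<k. 0 \<le> s j) \<and> (\<forall>j\<ge>k. s j = 0)}"

text \<open>C_B(R,f), with R = (r_0,...,r_{k-1}) given as a function nat \<Rightarrow> real^'n.\<close>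
definition CB :: "(real^'n) set \<Rightarrow> nat \<Rightarrow> (nat \<Rightarrow> real^'n) \<Rightarrow> real^'n \<Rightarrow> (nat \<Rightarrow> real) set" where
  "CB B k R f = (if f \<in> interior B
     then {s \<in> nonneg_orthant k. (\<Sum>j<k. s j * gauge_fn (transl B f) (R j)) \<ge> 1}
     else nonneg_orthant k)"

text \<open>C_{\<B>}(R,f) (equal to R^k_{\<ge>0} if the family is empty).\<close>
definition CBfam :: "(real^'n) set set \<Rightarrow> nat \<Rightarrow> (nat \<Rightarrow> real^'n) \<Rightarrow> real^'n \<Rightarrow> (nat \<Rightarrow> real) set" where
  "CBfam \<B> k R f = nonneg_orthant k \<inter> (\<Inter>B\<in>\<B>. CB B k R f)"

definition scale_set :: "real \<Rightarrow> (nat \<Rightarrow> real) set \<Rightarrow> (nat \<Rightarrow> real) set" where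
  "scale_set c C = (\<lambda>s j. c * s j) ` C"

definition rho_f :: "real^'n \<Rightarrow> (real^'n) set \<Rightarrow> (real^'n) set \<Rightarrow> ereal" where
  "rho_f f B L = Inf {ereal \<alpha> | \<alpha>. \<alpha> > 0 \<and>
     (\<forall>k R. k \<ge> 1 \<longrightarrow> CB B k R f \<subseteq> scale_set (1 / \<alpha>) (CB L k R f))}"

definition rho_f_fam :: "real^'n \<Rightarrow> (real^'n) set set \<Rightarrow> (real^'n) set \<Rightarrow> ereal" where
  "rho_f_fam f \<B> L = Inf {ereal \<alpha> | \<alpha>. \<alpha> > 0 \<and>
     (\<forall>k R. k \<ge> 1 \<longrightarrow> CBfam \<B> k R f \<subseteq> scale_set (1 / \<alpha>) (CB L k R f))}"

definition rho_fam :: "(real^'n) set set \<Rightarrow> (real^'n) set \<Rightarrow> ereal" where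
  "rho_fam \<B> L = (SUP f \<in> - int_points. rho_f_fam f \<B> L)"

definition f_closed :: "real^'n \<Rightarrow> (real^'n) set set \<Rightarrow> bool" where
  "f_closed f \<B> \<longleftrightarrow>
     (\<forall>(Bs :: nat \<Rightarrow> (real^'n) set) C.
        (\<forall>t. Bs t \<in> \<B> \<and> f \<in> interior (Bs t)) \<longrightarrow>
        C \<in> convex_bodies \<longrightarrow> f \<in> interior C \<longrightarrow>
        (\<forall>r. (\<lambda>t. gauge_fn (transl (Bs t) f) r) \<longlonglongrightarrow> gauge_fn (transl C f) r) \<longrightarrow>
        C \<in> \<B> \<and> f \<in> interior C)"

text \<open>cone(W): nonnegative combinations of the finite set W (= {0} if W is empty).\<close>
definition finite_cone :: "(real^'n) set \<Rightarrow> (real^'n) set" where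
  "finite_cone W = {\<Sum>w\<in>W. \<mu> w *\<^sub>R w | \<mu>. \<forall>w\<in>W. \<mu> w \<ge> 0}"

end

theory Submission
  imports Defs "HOL-Complex_Analysis.Great_Picard"
begin

text \<open>
  The upper bound holds because enlarging the family only shrinks \<open>C\<^sub>\<B>(R,f)\<close>.
  For the lower bound, fix \<open>f \<in> int L\<close> and an \<open>\<alpha>\<close> with \<open>C\<^sub>\<B>(R,f) \<subseteq> (1/\<alpha>) C\<^sub>L(R,f)\<close> for all \<open>R\<close>,
  and put \<open>m = |V| + |W| + 1\<close>. Testing this inclusion with the rays \<open>v - f\<close> (\<open>v \<in> V\<close>) and
  \<open>w \<in> W\<close>, on which \<open>\<psi>\<^sub>L\<^sub>-\<^sub>f\<close> is at most \<open>1\<close> and \<open>0\<close> respectively, shows that for every \<open>\<delta> > 0\<close>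
  some \<open>B \<in> \<B>\<close> has \<open>\<psi>\<^sub>B\<^sub>-\<^sub>f(v - f) \<le> m\<alpha>\<close> and \<open>\<psi>\<^sub>B\<^sub>-\<^sub>f(w) \<le> \<delta>\<close>. These gauges are uniformly
  Lipschitz, so along \<open>\<delta> \<rightarrow> 0\<close> a subsequence converges pointwise to a sublinear function,
  the gauge of a convex body \<open>C\<close>, which lies in \<open>\<B>\<close> by \<open>f\<close>-closedness. Its gauge is at most
  \<open>m\<alpha>\<close> on \<open>V - f\<close> and vanishes on \<open>W\<close>, hence \<open>\<psi>\<^sub>C\<^sub>-\<^sub>f \<le> m\<alpha> \<psi>\<^sub>L\<^sub>-\<^sub>f\<close> and \<open>\<rho>\<^sub>f(C,L) \<le> m\<alpha>\<close>.
\<close>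

section \<open>Gauges\<close>

lemma interior_zero_absorbing:
  fixes S :: "(real^'n) set"
  assumes "0 \<in> interior S"
  shows "\<exists>l>0. r \<in> (\<lambda>x. l *\<^sub>R x) ` S"
proof -
  obtain e where e: "e > 0" "ball 0 e \<subseteq> S" using assms mem_interior by blast
  define l where "l = norm r / e + 1"
  have l: "l > 0" using e by (simp add: l_def add_nonneg_pos)
  have "norm r < e * l" using e by (simp add: l_def field_simps)
  hence "norm (r /\<^sub>R l) < e" using l e by (simp add: field_simps)
  hence "r /\<^sub>R l \<in> S" using e by auto
  moreover have "r = l *\<^sub>R (r /\<^sub>R l)" using l by simp
  ultimately show ?thesis using l by blast
qed

lemma gauge_fn_nonneg:
  fixes S :: "(real^'n) set"
  assumes "0 \<in> interior S"
  shows "0 \<le> gauge_fn S r"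
  unfolding gauge_fn_def
  by (rule cInf_greatest) (use interior_zero_absorbing[OF assms, of r] in auto)

lemma gauge_fn_le:
  fixes S :: "(real^'n) set"
  assumes "l > 0" "r \<in> (\<lambda>x. l *\<^sub>R x) ` S"
  shows "gauge_fn S r \<le> l"
  unfolding gauge_fn_def
  by (rule cInf_lower) (use assms in \<open>auto intro!: bdd_belowI[where m=0]\<close>)

lemma gauge_fn_less_imp_mem:
  fixes S :: "(real^'n) set"
  assumes "convex S" "0 \<in> interior S" "gauge_fn S r < l"
  shows "r \<in> (\<lambda>x. l *\<^sub>R x) ` S"
proof -
  have "{l. l > 0 \<and> r \<in> (\<lambda>x. l *\<^sub>R x) ` S} \<noteq> {}"
    using interior_zero_absorbing[OF assms(2), of r] by auto
  from cInf_lessD[OF this assms(3)[unfolded gauge_fn_def]]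
  obtain x where x: "x > 0" "r \<in> (\<lambda>z. x *\<^sub>R z) ` S" "x < l" by auto
  obtain y where y: "y \<in> S" "r = x *\<^sub>R y" using x by auto
  have l: "l > 0" using x by simp
  have "0 \<in> S" using assms(2) interior_subset by blast
  hence "(x / l) *\<^sub>R y + (1 - x / l) *\<^sub>R 0 \<in> S"
    using convexD[OF assms(1) y(1) \<open>0 \<in> S\<close>, of "x / l" "1 - x / l"] x l by simp
  hence "(x / l) *\<^sub>R y \<in> S" by simp
  moreover have "r = l *\<^sub>R ((x / l) *\<^sub>R y)" using y l by simp
  ultimately show ?thesis by blast
qed

lemma gauge_fn_zero:
  fixes S :: "(real^'n) set"
  assumes "0 \<in> interior S"
  shows "gauge_fn S 0 = 0"
proof -
  have "0 \<in> S" using assms interior_subset by blast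
  hence "gauge_fn S 0 \<le> 0 + e" if "e > 0" for e
    using gauge_fn_le[of e 0 S] that by (simp add: image_iff)
  hence "gauge_fn S 0 \<le> 0" by (rule field_le_epsilon)
  thus ?thesis using gauge_fn_nonneg[OF assms] by (rule antisym)
qed

lemma gauge_fn_scale_le:
  fixes S :: "(real^'n) set"
  assumes "convex S" "0 \<in> interior S" "c \<ge> 0"
  shows "gauge_fn S (c *\<^sub>R r) \<le> c * gauge_fn S r"
proof (cases "c = 0")
  case True thus ?thesis using gauge_fn_zero[OF assms(2)] by simp
next
  case False
  hence c: "c > 0" using assms by simp
  have "gauge_fn S (c *\<^sub>R r) \<le> c * gauge_fn S r + e" if e: "e > 0" for e
  proof -
    define l where "l = gauge_fn S r + e / c"
    have "gauge_fn S r < l" using e c by (simp add: l_def)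
    then obtain y where y: "y \<in> S" "r = l *\<^sub>R y" using gauge_fn_less_imp_mem[OF assms(1,2)] by blast
    have l: "l > 0" using gauge_fn_nonneg[OF assms(2), of r] e c by (simp add: l_def add_nonneg_pos)
    have "c *\<^sub>R r \<in> (\<lambda>x. (c * l) *\<^sub>R x) ` S" using y by (intro image_eqI[of _ _ y]) auto
    hence "gauge_fn S (c *\<^sub>R r) \<le> c * l" using gauge_fn_le[of "c * l"] c l by simp
    also have "c * l = c * gauge_fn S r + e" using c by (simp add: l_def field_simps)
    finally show ?thesis .
  qed
  thus ?thesis by (rule field_le_epsilon)
qed

lemma gauge_fn_scaleR:
  fixes S :: "(real^'n) set"
  assumes "convex S" "0 \<in> interior S" "c \<ge> 0"
  shows "gauge_fn S (c *\<^sub>R r) = c * gauge_fn S r"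
proof (cases "c = 0")
  case True thus ?thesis using gauge_fn_zero[OF assms(2)] by simp
next
  case False
  hence c: "c > 0" using assms by simp
  have "gauge_fn S ((1/c) *\<^sub>R (c *\<^sub>R r)) \<le> (1/c) * gauge_fn S (c *\<^sub>R r)"
    by (rule gauge_fn_scale_le[OF assms(1,2)]) (use c in simp)
  hence "c * gauge_fn S r \<le> gauge_fn S (c *\<^sub>R r)" using c by (simp add: field_simps)
  thus ?thesis using gauge_fn_scale_le[OF assms, of r] by simp
qed

lemma gauge_fn_triangle:
  fixes S :: "(real^'n) set"
  assumes "convex S" "0 \<in> interior S"
  shows "gauge_fn S (x + y) \<le> gauge_fn S x + gauge_fn S y"
proof -
  have "gauge_fn S (x + y) \<le> gauge_fn S x + gauge_fn S y + e" if e: "e > 0" for e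
  proof -
    define a where "a = gauge_fn S x + e/2"
    define b where "b = gauge_fn S y + e/2"
    have a: "a > 0" "gauge_fn S x < a" using gauge_fn_nonneg[OF assms(2), of x] e by (auto simp: a_def)
    have b: "b > 0" "gauge_fn S y < b" using gauge_fn_nonneg[OF assms(2), of y] e by (auto simp: b_def)
    obtain x' where x': "x' \<in> S" "x = a *\<^sub>R x'" using gauge_fn_less_imp_mem[OF assms a(2)] by blast
    obtain y' where y': "y' \<in> S" "y = b *\<^sub>R y'" using gauge_fn_less_imp_mem[OF assms b(2)] by blast
    have "(a/(a+b)) *\<^sub>R x' + (b/(a+b)) *\<^sub>R y' \<in> S"
      using convexD[OF assms(1) x'(1) y'(1), of "a/(a+b)" "b/(a+b)"] a b
      by (simp add: add_divide_distrib[symmetric])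
    moreover have "x + y = (a+b) *\<^sub>R ((a/(a+b)) *\<^sub>R x' + (b/(a+b)) *\<^sub>R y')"
      using a b x' y' by (simp add: scaleR_add_right)
    ultimately have "gauge_fn S (x + y) \<le> a + b" using gauge_fn_le[of "a+b" "x+y" S] a b by auto
    thus ?thesis by (simp add: a_def b_def)
  qed
  thus ?thesis by (rule field_le_epsilon)
qed

lemma gauge_fn_sum_le:
  fixes S :: "(real^'n) set"
  assumes "convex S" "0 \<in> interior S" "finite I" "\<And>i. i \<in> I \<Longrightarrow> c i \<ge> 0"
  shows "gauge_fn S (\<Sum>i\<in>I. c i *\<^sub>R x i) \<le> (\<Sum>i\<in>I. c i * gauge_fn S (x i))"
  using assms(3,4)
proof (induction I rule: finite_induct)
  case empty thus ?case using gauge_fn_zero[OF assms(2)] by simp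
next
  case (insert j I)
  have "gauge_fn S (\<Sum>i\<in>insert j I. c i *\<^sub>R x i)
      \<le> gauge_fn S (c j *\<^sub>R x j) + gauge_fn S (\<Sum>i\<in>I. c i *\<^sub>R x i)"
    using insert gauge_fn_triangle[OF assms(1,2)] by simp
  also have "\<dots> \<le> c j * gauge_fn S (x j) + (\<Sum>i\<in>I. c i * gauge_fn S (x i))"
    using gauge_fn_scale_le[OF assms(1,2), of "c j" "x j"] insert by (intro add_mono) auto
  finally show ?case using insert by simp
qed

lemma subadditive_abs_diff_le:
  fixes \<phi> :: "'a::real_normed_vector \<Rightarrow> real"
  assumes "\<And>x y. \<phi> (x + y) \<le> \<phi> x + \<phi> y" "\<And>x. \<phi> x \<le> M * norm x"
  shows "\<bar>\<phi> x - \<phi> y\<bar> \<le> M * dist x y"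
proof -
  have "\<phi> x \<le> \<phi> y + \<phi> (x - y)" "\<phi> y \<le> \<phi> x + \<phi> (y - x)"
    using assms(1)[of y "x - y"] assms(1)[of x "y - x"] by simp_all
  moreover have "\<phi> (x - y) \<le> M * dist x y" "\<phi> (y - x) \<le> M * dist x y"
    using assms(2)[of "x - y"] assms(2)[of "y - x"] by (auto simp: dist_norm norm_minus_commute)
  ultimately show ?thesis by (simp add: abs_le_iff)
qed

lemma gauge_fn_le_norm_of_basis:
  fixes S :: "(real^'n) set"
  assumes "convex S" "0 \<in> interior S" "d > 0"
    and K: "\<And>b. b \<in> Basis \<Longrightarrow> gauge_fn S (d *\<^sub>R b) \<le> K \<and> gauge_fn S (-(d *\<^sub>R b)) \<le> K"
  shows "gauge_fn S r \<le> (real DIM(real^'n) * K / d) * norm r"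
proof -
  have "gauge_fn S ((r \<bullet> b) *\<^sub>R b) \<le> norm r / d * K" if b: "b \<in> Basis" for b :: "real^'n"
  proof -
    obtain \<epsilon> :: real where \<epsilon>: "\<epsilon> \<in> {-1, 1}" "r \<bullet> b = \<epsilon> * \<bar>r \<bullet> b\<bar>"
      using that[of 1] that[of "-1"] by (cases "r \<bullet> b \<ge> 0") auto
    have "(r \<bullet> b) *\<^sub>R b = (\<bar>r \<bullet> b\<bar> / d) *\<^sub>R (\<epsilon> *\<^sub>R (d *\<^sub>R b))"
      using assms(3) by (subst \<epsilon>(2)) simp
    hence "gauge_fn S ((r \<bullet> b) *\<^sub>R b) = gauge_fn S ((\<bar>r \<bullet> b\<bar> / d) *\<^sub>R (\<epsilon> *\<^sub>R (d *\<^sub>R b)))"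
      by (rule arg_cong)
    also have "\<dots> \<le> \<bar>r \<bullet> b\<bar> / d * gauge_fn S (\<epsilon> *\<^sub>R (d *\<^sub>R b))"
      by (rule gauge_fn_scale_le[OF assms(1,2)]) (use assms(3) in simp)
    also have "\<dots> \<le> \<bar>r \<bullet> b\<bar> / d * K"
      using K[OF b] \<epsilon>(1) assms(3) by (intro mult_left_mono) auto
    also have "\<dots> \<le> norm r / d * K"
      using Basis_le_norm[OF b, of r] assms(3) K[OF b] gauge_fn_nonneg[OF assms(2), of "d *\<^sub>R b"]
      by (intro mult_right_mono divide_right_mono) auto
    finally show ?thesis .
  qed
  hence "(\<Sum>b\<in>Basis. 1 * gauge_fn S ((r \<bullet> b) *\<^sub>R b)) \<le> (\<Sum>b\<in>(Basis::(real^'n) set). norm r / d * K)"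
    by (intro sum_mono) simp
  moreover have "gauge_fn S r \<le> (\<Sum>b\<in>Basis. 1 * gauge_fn S ((r \<bullet> b) *\<^sub>R b))"
    using gauge_fn_sum_le[OF assms(1,2), of Basis "\<lambda>_. 1" "\<lambda>b. (r \<bullet> b) *\<^sub>R b"]
    by (simp add: euclidean_representation)
  ultimately show ?thesis by (simp add: mult_ac)
qed

lemma zero_interior_transl:
  fixes B :: "(real^'n) set"
  assumes "f \<in> interior B"
  shows "0 \<in> interior (transl B f)"
  unfolding transl_def interior_translation_subtract
  using assms by (intro image_eqI[of _ _ f]) auto

lemma convex_transl:
  fixes B :: "(real^'n) set"
  assumes "convex B"
  shows "convex (transl B f)"
  unfolding transl_def using convex_translation[OF assms, of "-f"] by (simp cong: image_cong_simp)

lemma gauge_fn_transl_le_one: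
  fixes L :: "(real^'n) set"
  assumes "v \<in> L"
  shows "gauge_fn (transl L f) (v - f) \<le> 1"
  by (rule gauge_fn_le) (use assms in \<open>auto simp: transl_def\<close>)

lemma gauge_fn_sublevel_set:
  fixes \<phi> :: "real^'n \<Rightarrow> real"
  assumes nonneg: "\<And>x. 0 \<le> \<phi> x" and scale: "\<And>c x. c \<ge> 0 \<Longrightarrow> \<phi> (c *\<^sub>R x) = c * \<phi> x"
  shows "gauge_fn {x. \<phi> x \<le> 1} r = \<phi> r"
proof -
  have "{l. l > 0 \<and> r \<in> (\<lambda>x. l *\<^sub>R x) ` {x. \<phi> x \<le> 1}} = {l. l > 0 \<and> \<phi> r \<le> l}"
  proof (intro set_eqI iffI)
    fix l assume "l \<in> {l. l > 0 \<and> r \<in> (\<lambda>x. l *\<^sub>R x) ` {x. \<phi> x \<le> 1}}"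
    then obtain y where y: "l > 0" "\<phi> y \<le> 1" "r = l *\<^sub>R y" by auto
    have "\<phi> r = l * \<phi> y" using scale y by simp
    also have "\<dots> \<le> l" using y by (simp add: mult_left_le)
    finally show "l \<in> {l. l > 0 \<and> \<phi> r \<le> l}" using y by simp
  next
    fix l assume l: "l \<in> {l. l > 0 \<and> \<phi> r \<le> l}"
    have "\<phi> ((1/l) *\<^sub>R r) \<le> 1" using scale[of "1/l" r] l by simp
    moreover have "r = l *\<^sub>R ((1/l) *\<^sub>R r)" using l by simp
    ultimately show "l \<in> {l. l > 0 \<and> r \<in> (\<lambda>x. l *\<^sub>R x) ` {x. \<phi> x \<le> 1}}" using l by blast
  qed
  also have "\<dots> = (if \<phi> r = 0 then {0<..} else {\<phi> r..})" using nonneg[of r] by auto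
  finally show ?thesis unfolding gauge_fn_def by simp
qed

lemma sublinear_gauge_body:
  fixes \<phi> :: "real^'n \<Rightarrow> real" and f :: "real^'n"
  assumes nonneg: "\<And>x. 0 \<le> \<phi> x" and bound: "\<And>x. \<phi> x \<le> M * norm x" and "M > 0"
    and add: "\<And>x y. \<phi> (x + y) \<le> \<phi> x + \<phi> y"
    and scale: "\<And>c x. c \<ge> 0 \<Longrightarrow> \<phi> (c *\<^sub>R x) = c * \<phi> x"
  shows "{x. \<phi> (x - f) \<le> 1} \<in> convex_bodies" "f \<in> interior {x. \<phi> (x - f) \<le> 1}"
    "gauge_fn (transl {x. \<phi> (x - f) \<le> 1} f) r = \<phi> r"
proof -
  define C where "C = {x. \<phi> (x - f) \<le> 1}"
  have "dist (\<phi> (x - f)) (\<phi> (y - f)) \<le> M * dist x y" for x y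
    using subadditive_abs_diff_le[OF add bound, of "x - f" "y - f"] by (simp add: dist_real_def dist_norm)
  hence "continuous_on UNIV (\<lambda>x. \<phi> (x - f))"
    using \<open>M > 0\<close> by (intro lipschitz_on_continuous_on lipschitz_onI) auto
  hence closed: "closed C" unfolding C_def by (rule closed_Collect_le) simp
  have convex: "convex C"
  proof (rule convexI)
    fix x y and u v :: real assume xy: "x \<in> C" "y \<in> C" "0 \<le> u" "0 \<le> v" "u + v = 1"
    have "u *\<^sub>R x + v *\<^sub>R y - f = u *\<^sub>R (x - f) + v *\<^sub>R (y - f)"
      using xy(5) by (simp add: algebra_simps flip: scaleR_add_left)
    hence "\<phi> (u *\<^sub>R x + v *\<^sub>R y - f) \<le> \<phi> (u *\<^sub>R (x - f)) + \<phi> (v *\<^sub>R (y - f))"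
      using add by simp
    also have "\<dots> = u * \<phi> (x - f) + v * \<phi> (y - f)" using scale xy(3,4) by simp
    also have "\<dots> \<le> u * 1 + v * 1" using xy by (intro add_mono mult_left_mono) (auto simp: C_def)
    finally show "u *\<^sub>R x + v *\<^sub>R y \<in> C" using xy(5) by (simp add: C_def)
  qed
  have "ball f (1 / M) \<subseteq> C"
  proof
    fix x assume "x \<in> ball f (1 / M)"
    hence "M * norm (x - f) < 1" using \<open>M > 0\<close> by (simp add: dist_norm norm_minus_commute field_simps)
    thus "x \<in> C" using bound[of "x - f"] by (simp add: C_def)
  qed
  hence fC: "f \<in> interior C" using \<open>M > 0\<close> mem_interior by (metis divide_pos_pos zero_less_one)
  thus "f \<in> interior {x. \<phi> (x - f) \<le> 1}" by (simp add: C_def)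
  hence "aff_dim C = int DIM(real^'n)" using fC by (intro aff_dim_nonempty_interior) auto
  thus "{x. \<phi> (x - f) \<le> 1} \<in> convex_bodies"
    unfolding C_def[symmetric] using closed convex by (simp add: convex_bodies_def)
  have "transl {x. \<phi> (x - f) \<le> 1} f = {r. \<phi> r \<le> 1}" unfolding transl_def
    by (auto intro: image_eqI[of _ _ "_ + f"])
  thus "gauge_fn (transl {x. \<phi> (x - f) \<le> 1} f) r = \<phi> r"
    using gauge_fn_sublevel_set[OF nonneg scale] by simp
qed

section \<open>Gauges of polyhedral sets\<close>

definition polyhedral_set :: "(real^'n) set \<Rightarrow> (real^'n) set \<Rightarrow> (real^'n) set" where
  "polyhedral_set V W = {v + w | v w. v \<in> convex hull V \<and> w \<in> finite_cone W}"

lemma zero_mem_finite_cone: "0 \<in> finite_cone W"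
  unfolding finite_cone_def by (intro CollectI exI[of _ "\<lambda>_. 0"]) auto

lemma finite_cone_add_ray:
  assumes "finite W" "c \<in> finite_cone W" "w \<in> W" "t \<ge> 0"
  shows "c + t *\<^sub>R w \<in> finite_cone W"
proof -
  obtain \<mu> where \<mu>: "\<forall>w\<in>W. 0 \<le> \<mu> w" "c = (\<Sum>w\<in>W. \<mu> w *\<^sub>R w)"
    using assms(2) unfolding finite_cone_def by auto
  define \<mu>' where "\<mu>' = \<mu>(w := \<mu> w + t)"
  have "(\<Sum>x\<in>W. \<mu>' x *\<^sub>R x) = (\<Sum>x\<in>W. \<mu> x *\<^sub>R x) + t *\<^sub>R w"
    using assms(1,3) by (simp add: \<mu>'_def sum.remove scaleR_add_left algebra_simps)
  moreover have "\<forall>x\<in>W. 0 \<le> \<mu>' x" using \<mu> assms(4) by (simp add: \<mu>'_def)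
  ultimately show ?thesis using \<mu>(2) unfolding finite_cone_def by (intro CollectI exI[of _ \<mu>']) auto
qed

lemma vertex_mem_polyhedral_set:
  assumes "v \<in> V"
  shows "v \<in> polyhedral_set V W"
  unfolding polyhedral_set_def using hull_inc[OF assms] zero_mem_finite_cone by force

lemma polyhedral_set_decomp:
  assumes "finite V" "u \<in> polyhedral_set V W"
  shows "\<exists>\<theta> \<mu>. (\<forall>v\<in>V. 0 \<le> \<theta> v) \<and> sum \<theta> V = 1 \<and> (\<forall>w\<in>W. 0 \<le> \<mu> w) \<and>
    u - f = (\<Sum>v\<in>V. \<theta> v *\<^sub>R (v - f)) + (\<Sum>w\<in>W. \<mu> w *\<^sub>R w)"
proof -
  obtain a c where ac: "u = a + c" "a \<in> convex hull V" "c \<in> finite_cone W"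
    using assms(2) unfolding polyhedral_set_def by auto
  obtain \<theta> where \<theta>: "\<forall>v\<in>V. 0 \<le> \<theta> v" "sum \<theta> V = 1" "(\<Sum>v\<in>V. \<theta> v *\<^sub>R v) = a"
    using ac(2) convex_hull_finite[OF assms(1)] by auto
  obtain \<mu> where \<mu>: "\<forall>w\<in>W. 0 \<le> \<mu> w" "c = (\<Sum>w\<in>W. \<mu> w *\<^sub>R w)"
    using ac(3) unfolding finite_cone_def by auto
  have "(\<Sum>v\<in>V. \<theta> v *\<^sub>R (v - f)) = a - f"
    using \<theta> by (simp add: scaleR_diff_right sum_subtractf scaleR_sum_left[symmetric])
  hence "u - f = (\<Sum>v\<in>V. \<theta> v *\<^sub>R (v - f)) + (\<Sum>w\<in>W. \<mu> w *\<^sub>R w)"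
    using ac(1) \<mu>(2) by (simp add: algebra_simps)
  thus ?thesis using \<theta>(1,2) \<mu>(1) by blast
qed

lemma gauge_fn_conic_comb_le:
  fixes S :: "(real^'n) set"
  assumes S: "convex S" "0 \<in> interior S" and "finite V" "finite W"
    and \<theta>: "\<forall>v\<in>V. 0 \<le> \<theta> v" "sum \<theta> V = 1" and \<mu>: "\<forall>w\<in>W. 0 \<le> \<mu> w"
    and V: "\<forall>v\<in>V. gauge_fn S (x v) \<le> a" and W: "\<forall>w\<in>W. gauge_fn S (y w) \<le> b"
  shows "gauge_fn S ((\<Sum>v\<in>V. \<theta> v *\<^sub>R x v) + (\<Sum>w\<in>W. \<mu> w *\<^sub>R y w)) \<le> a + b * sum \<mu> W"
proof -
  have "gauge_fn S ((\<Sum>v\<in>V. \<theta> v *\<^sub>R x v) + (\<Sum>w\<in>W. \<mu> w *\<^sub>R y w))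
      \<le> gauge_fn S (\<Sum>v\<in>V. \<theta> v *\<^sub>R x v) + gauge_fn S (\<Sum>w\<in>W. \<mu> w *\<^sub>R y w)"
    by (rule gauge_fn_triangle[OF S])
  also have "\<dots> \<le> (\<Sum>v\<in>V. \<theta> v * gauge_fn S (x v)) + (\<Sum>w\<in>W. \<mu> w * gauge_fn S (y w))"
    using \<theta> \<mu> assms(3,4) by (intro add_mono gauge_fn_sum_le[OF S]) auto
  also have "\<dots> \<le> (\<Sum>v\<in>V. \<theta> v * a) + (\<Sum>w\<in>W. \<mu> w * b)"
    using V W \<theta> \<mu> by (intro add_mono sum_mono mult_left_mono) auto
  also have "\<dots> = a + b * sum \<mu> W"
    using \<theta>(2) by (simp add: sum_distrib_right[symmetric] sum_distrib_left[symmetric] mult.commute)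
  finally show ?thesis .
qed

lemma gauge_fn_recession_zero:
  assumes "finite W" "f \<in> interior (polyhedral_set V W)" "w \<in> W"
  shows "gauge_fn (transl (polyhedral_set V W) f) w = 0"
proof -
  let ?L = "polyhedral_set V W"
  obtain a c where ac: "f = a + c" "a \<in> convex hull V" "c \<in> finite_cone W"
    using interior_subset[of ?L] assms(2) unfolding polyhedral_set_def by blast
  have "gauge_fn (transl ?L f) w \<le> 0 + e" if e: "e > 0" for e
  proof -
    have "c + (1/e) *\<^sub>R w \<in> finite_cone W" using finite_cone_add_ray[OF assms(1) ac(3) assms(3)] e by simp
    hence "f + (1/e) *\<^sub>R w \<in> ?L" using ac unfolding polyhedral_set_def by (auto simp: add.assoc)
    hence "(1/e) *\<^sub>R w \<in> transl ?L f" unfolding transl_def by (intro image_eqI[of _ _ "f + (1/e) *\<^sub>R w"]) auto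
    hence "w \<in> (\<lambda>x. e *\<^sub>R x) ` transl ?L f" using e by (intro image_eqI[of _ _ "(1/e) *\<^sub>R w"]) auto
    thus ?thesis using gauge_fn_le[OF e] by simp
  qed
  hence "gauge_fn (transl ?L f) w \<le> 0" by (rule field_le_epsilon)
  thus ?thesis using gauge_fn_nonneg[OF zero_interior_transl[OF assms(2)]] by (rule antisym)
qed

lemma gauge_fn_le_mult_polyhedral:
  assumes "finite V" "finite W" "L = polyhedral_set V W" "convex L" "f \<in> interior L"
    and "convex C" "f \<in> interior C" "a \<ge> 0"
    and "\<forall>v\<in>V. gauge_fn (transl C f) (v - f) \<le> a" "\<forall>w\<in>W. gauge_fn (transl C f) w \<le> 0"
  shows "gauge_fn (transl C f) r \<le> a * gauge_fn (transl L f) r"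
proof -
  note C = convex_transl[OF assms(6)] zero_interior_transl[OF assms(7)]
  note L = convex_transl[OF assms(4)] zero_interior_transl[OF assms(5)]
  have "gauge_fn (transl C f) r \<le> a * gauge_fn (transl L f) r + e" if e: "e > 0" for e
  proof -
    define l where "l = gauge_fn (transl L f) r + e / (a + 1)"
    have l: "gauge_fn (transl L f) r < l" "l > 0"
      using e assms(8) gauge_fn_nonneg[OF L(2), of r] by (auto simp: l_def add_nonneg_pos)
    obtain y where y: "y \<in> transl L f" "r = l *\<^sub>R y" using gauge_fn_less_imp_mem[OF L l(1)] by blast
    obtain u where u: "u \<in> L" "y = u - f" using y(1) unfolding transl_def by blast
    obtain \<theta> \<mu> where \<theta>\<mu>: "\<forall>v\<in>V. 0 \<le> \<theta> v" "sum \<theta> V = 1" "\<forall>w\<in>W. 0 \<le> \<mu> w"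
      "y = (\<Sum>v\<in>V. \<theta> v *\<^sub>R (v - f)) + (\<Sum>w\<in>W. \<mu> w *\<^sub>R w)"
      using polyhedral_set_decomp[OF assms(1), of u W f] u assms(3) by blast
    have "gauge_fn (transl C f) y \<le> a"
      using gauge_fn_conic_comb_le[OF C assms(1,2) \<theta>\<mu>(1-3) assms(9,10)] \<theta>\<mu>(4) by simp
    hence "gauge_fn (transl C f) r \<le> l * a"
      using gauge_fn_scaleR[OF C, of l y] l(2) y(2) by (simp add: mult_left_mono)
    also have "\<dots> = a * gauge_fn (transl L f) r + a * (e / (a + 1))" by (simp add: l_def algebra_simps)
    also have "a * (e / (a + 1)) \<le> e" using assms(8) e by (simp add: field_simps)
    finally show ?thesis by simp
  qed
  thus ?thesis by (rule field_le_epsilon)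
qed

lemma gauge_fn_polyhedral_finite_le:
  fixes V W U :: "(real^'n) set"
  assumes "finite V" "finite W" "finite U" "U \<subseteq> polyhedral_set V W"
  obtains K where "K \<ge> 1" "\<And>S a u. convex S \<Longrightarrow> 0 \<in> interior S \<Longrightarrow> 0 \<le> a \<Longrightarrow>
      \<forall>v\<in>V. gauge_fn S (v - f) \<le> a \<Longrightarrow> \<forall>w\<in>W. gauge_fn S w \<le> a \<Longrightarrow> u \<in> U \<Longrightarrow>
      gauge_fn S (u - f) \<le> a * K"
  using assms(3,4)
proof (induction U arbitrary: thesis rule: finite_induct)
  case empty thus ?case by (metis empty_iff order_refl)
next
  case (insert u U)
  obtain K where K: "K \<ge> 1" "\<And>S a u. convex S \<Longrightarrow> 0 \<in> interior S \<Longrightarrow> 0 \<le> a \<Longrightarrow>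
      \<forall>v\<in>V. gauge_fn S (v - f) \<le> a \<Longrightarrow> \<forall>w\<in>W. gauge_fn S w \<le> a \<Longrightarrow> u \<in> U \<Longrightarrow>
      gauge_fn S (u - f) \<le> a * K"
    using insert.IH insert.prems(2) by blast
  obtain \<theta> \<mu> where \<theta>\<mu>: "\<forall>v\<in>V. 0 \<le> \<theta> v" "sum \<theta> V = 1" "\<forall>w\<in>W. 0 \<le> \<mu> w"
    "u - f = (\<Sum>v\<in>V. \<theta> v *\<^sub>R (v - f)) + (\<Sum>w\<in>W. \<mu> w *\<^sub>R w)"
    using polyhedral_set_decomp[OF assms(1), of u W f] insert.prems(2) by blast
  define K' where "K' = max K (1 + sum \<mu> W)"
  show ?case
  proof (rule insert.prems(1)[of K'])
    show "K' \<ge> 1" using K(1) by (simp add: K'_def)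
    fix S and a :: real and u'
    assume S: "convex S" "0 \<in> interior S" and a: "0 \<le> a"
      and V: "\<forall>v\<in>V. gauge_fn S (v - f) \<le> a" and W: "\<forall>w\<in>W. gauge_fn S w \<le> a"
      and u': "u' \<in> insert u U"
    show "gauge_fn S (u' - f) \<le> a * K'"
    proof (cases "u' = u")
      case True
      have "gauge_fn S (u - f) \<le> a * (1 + sum \<mu> W)"
        using gauge_fn_conic_comb_le[OF S assms(1,2) \<theta>\<mu>(1-3) V W] \<theta>\<mu>(4) by (simp add: algebra_simps)
      thus ?thesis using True a by (simp add: K'_def) (meson max.cobounded2 mult_left_mono order_trans)
    next
      case False
      hence "gauge_fn S (u' - f) \<le> a * K" using K(2)[OF S a V W] u' by blast
      thus ?thesis using a by (simp add: K'_def) (meson max.cobounded1 mult_left_mono order_trans)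
    qed
  qed
qed

lemma gauge_fn_le_norm_polyhedral:
  fixes V W :: "(real^'n) set"
  assumes "finite V" "finite W" "f \<in> interior (polyhedral_set V W)"
  obtains M where "M > 0" "\<And>S a r. convex S \<Longrightarrow> 0 \<in> interior S \<Longrightarrow> 0 \<le> a \<Longrightarrow>
      (\<forall>v\<in>V. gauge_fn S (v - f) \<le> a) \<Longrightarrow> (\<forall>w\<in>W. gauge_fn S w \<le> a) \<Longrightarrow>
      gauge_fn S r \<le> a * M * norm r"
proof -
  obtain e where e: "e > 0" "ball f e \<subseteq> polyhedral_set V W" using assms(3) mem_interior by blast
  define d where "d = e / 2"
  have d: "d > 0" using e by (simp add: d_def)
  define U where "U = (\<lambda>b. f + d *\<^sub>R b) ` Basis \<union> (\<lambda>b. f - d *\<^sub>R b) ` (Basis :: (real^'n) set)"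
  have "dist f u < e" if "u \<in> U" for u
    using that d by (auto simp: U_def dist_norm d_def)
  hence "U \<subseteq> polyhedral_set V W" using e(2) by auto
  then obtain K where K: "K \<ge> 1" "\<And>S a u. convex S \<Longrightarrow> 0 \<in> interior S \<Longrightarrow> 0 \<le> a \<Longrightarrow>
      \<forall>v\<in>V. gauge_fn S (v - f) \<le> a \<Longrightarrow> \<forall>w\<in>W. gauge_fn S w \<le> a \<Longrightarrow> u \<in> U \<Longrightarrow>
      gauge_fn S (u - f) \<le> a * K"
    using gauge_fn_polyhedral_finite_le[OF assms(1,2), of U f] by (auto simp: U_def)
  show ?thesis
  proof (rule that[of "real DIM(real^'n) * K / d"])
    show "real DIM(real^'n) * K / d > 0" using K d by simp
    fix S and a :: real and r
    assume S: "convex S" "0 \<in> interior S" and a: "0 \<le> a"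
      and V: "\<forall>v\<in>V. gauge_fn S (v - f) \<le> a" and W: "\<forall>w\<in>W. gauge_fn S w \<le> a"
    have "f + d *\<^sub>R b \<in> U" "f - d *\<^sub>R b \<in> U" if "b \<in> Basis" for b
      using that by (auto simp: U_def)
    hence "gauge_fn S (d *\<^sub>R b) \<le> a * K \<and> gauge_fn S (-(d *\<^sub>R b)) \<le> a * K" if "b \<in> Basis" for b
      using K(2)[OF S a V W, of "f + d *\<^sub>R b"] K(2)[OF S a V W, of "f - d *\<^sub>R b"] that by simp
    from gauge_fn_le_norm_of_basis[OF S d this]
    show "gauge_fn S r \<le> a * (real DIM(real^'n) * K / d) * norm r" by (simp add: mult_ac)
  qed
qed

section \<open>Limits of gauges\<close>

text \<open>Diagonalise on a countable dense set, then spread the convergence by equicontinuity.\<close>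

lemma lipschitz_sequence_convergent_subseq:
  fixes g :: "nat \<Rightarrow> 'a::{metric_space,second_countable_topology} \<Rightarrow> real"
  assumes lip: "\<And>n x y. \<bar>g n x - g n y\<bar> \<le> M * dist x y"
    and bounded: "\<And>n x. \<bar>g n x\<bar> \<le> c x"
  obtains \<sigma> where "strict_mono \<sigma>" "\<And>x. convergent (\<lambda>n. g (\<sigma> n) x)"
proof -
  obtain D :: "'a set" where D: "countable D" "\<And>X. open X \<Longrightarrow> X \<noteq> {} \<Longrightarrow> \<exists>d\<in>D. d \<in> X"
    by (rule countable_dense_setE) blast
  define h where "h n x = g n x / (1 + \<bar>c x\<bar>)" for n x
  have "norm (h n x) \<le> 1" for n x
    using bounded[of n x] by (simp add: h_def abs_le_iff divide_le_eq add_pos_nonneg)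
  then obtain \<sigma> where \<sigma>: "strict_mono \<sigma>" "\<And>x. x \<in> D \<Longrightarrow> \<exists>l. (\<lambda>n. h (\<sigma> n) x) \<longlonglongrightarrow> l"
    using function_convergent_subsequence[OF D(1), of h 1] by blast
  have Cauchy_D: "Cauchy (\<lambda>n. g (\<sigma> n) x)" if x: "x \<in> D" for x
  proof -
    obtain l where "(\<lambda>n. h (\<sigma> n) x) \<longlonglongrightarrow> l" using \<sigma>(2)[OF x] by blast
    hence "(\<lambda>n. (1 + \<bar>c x\<bar>) * h (\<sigma> n) x) \<longlonglongrightarrow> (1 + \<bar>c x\<bar>) * l" by (intro tendsto_mult_left)
    moreover have "(1 + \<bar>c x\<bar>) * h (\<sigma> n) x = g (\<sigma> n) x" for n
      by (simp add: h_def add_pos_nonneg)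
    ultimately have "(\<lambda>n. g (\<sigma> n) x) \<longlonglongrightarrow> (1 + \<bar>c x\<bar>) * l" by simp
    thus ?thesis by (rule LIMSEQ_imp_Cauchy)
  qed
  have "Cauchy (\<lambda>n. g (\<sigma> n) x)" for x
  proof (rule CauchyI)
    fix \<epsilon> :: real assume \<epsilon>: "\<epsilon> > 0"
    define K where "K = \<bar>M\<bar> + 1"
    have K: "K > 0" "M \<le> K" by (auto simp: K_def)
    define \<delta> where "\<delta> = \<epsilon> / 3 / K"
    have "\<delta> > 0" using \<epsilon> K by (simp add: \<delta>_def)
    then obtain y where y: "y \<in> D" "dist x y < \<delta>" using D(2)[of "ball x \<delta>"] by auto
    have "M * dist x y \<le> K * dist x y" using K by (intro mult_right_mono) auto
    also have "\<dots> < K * \<delta>" using y(2) K by (intro mult_strict_left_mono) auto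
    also have "\<dots> = \<epsilon> / 3" using K by (simp add: \<delta>_def)
    finally have xy: "M * dist x y < \<epsilon> / 3" .
    obtain N where N: "\<forall>m\<ge>N. \<forall>n\<ge>N. norm (g (\<sigma> m) y - g (\<sigma> n) y) < \<epsilon> / 3"
      using CauchyD[OF Cauchy_D[OF y(1)], of "\<epsilon> / 3"] \<epsilon> by auto
    have "norm (g (\<sigma> m) x - g (\<sigma> n) x) < \<epsilon>" if "N \<le> m" "N \<le> n" for m n
    proof -
      have "\<bar>g (\<sigma> m) y - g (\<sigma> n) y\<bar> < \<epsilon> / 3" using N that by auto
      thus ?thesis using lip[of "\<sigma> m" x y] lip[of "\<sigma> n" x y] xy
        unfolding real_norm_def abs_le_iff abs_less_iff by linarith
    qed
    thus "\<exists>N. \<forall>m\<ge>N. \<forall>n\<ge>N. norm (g (\<sigma> m) x - g (\<sigma> n) x) < \<epsilon>" by blast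
  qed
  thus ?thesis using that \<sigma>(1) by (simp add: Cauchy_convergent_iff)
qed

lemma gauge_limit_body:
  fixes Bs :: "nat \<Rightarrow> (real^'n) set" and f :: "real^'n"
  assumes "\<And>t. convex (Bs t)" "\<And>t. f \<in> interior (Bs t)" "M > 0"
    and bound: "\<And>t r. gauge_fn (transl (Bs t) f) r \<le> M * norm r"
  obtains \<sigma> C where "strict_mono \<sigma>" "C \<in> convex_bodies" "f \<in> interior C"
    "\<And>r. (\<lambda>t. gauge_fn (transl (Bs (\<sigma> t)) f) r) \<longlonglongrightarrow> gauge_fn (transl C f) r"
proof -
  define g where "g t = gauge_fn (transl (Bs t) f)" for t
  note S = convex_transl[OF assms(1)] zero_interior_transl[OF assms(2)]
  have add: "g t (x + y) \<le> g t x + g t y" for t x y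
    unfolding g_def by (rule gauge_fn_triangle[OF S])
  have nonneg: "0 \<le> g t x" for t x
    unfolding g_def by (rule gauge_fn_nonneg[OF S(2)])
  have "\<bar>g n x - g n y\<bar> \<le> M * dist x y" for n x y
    using subadditive_abs_diff_le[of "g n" M] add bound by (simp add: g_def)
  moreover have "\<bar>g n x\<bar> \<le> M * norm x" for n x
    using nonneg bound by (simp add: g_def)
  ultimately obtain \<sigma> where \<sigma>: "strict_mono \<sigma>" "\<And>x. convergent (\<lambda>n. g (\<sigma> n) x)"
    using lipschitz_sequence_convergent_subseq[of g M "\<lambda>x. M * norm x"] by blast
  define \<phi> where "\<phi> x = lim (\<lambda>n. g (\<sigma> n) x)" for x
  have lim: "(\<lambda>n. g (\<sigma> n) x) \<longlonglongrightarrow> \<phi> x" for x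
    using \<sigma>(2) unfolding \<phi>_def convergent_LIMSEQ_iff .
  have \<phi>_nonneg: "0 \<le> \<phi> x" for x
    by (rule LIMSEQ_le[OF tendsto_const lim]) (use nonneg in auto)
  have \<phi>_bound: "\<phi> x \<le> M * norm x" for x
    by (rule LIMSEQ_le[OF lim tendsto_const]) (use bound in \<open>auto simp: g_def\<close>)
  have \<phi>_add: "\<phi> (x + y) \<le> \<phi> x + \<phi> y" for x y
    by (rule LIMSEQ_le[OF lim tendsto_add[OF lim lim]]) (use add in auto)
  have \<phi>_scale: "\<phi> (c *\<^sub>R x) = c * \<phi> x" if "c \<ge> 0" for c x
  proof -
    have "(\<lambda>n. g (\<sigma> n) (c *\<^sub>R x)) = (\<lambda>n. c * g (\<sigma> n) x)"
      using gauge_fn_scaleR[OF S that] by (simp add: g_def)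
    thus ?thesis using lim[of "c *\<^sub>R x"] tendsto_mult_left[OF lim, of c] LIMSEQ_unique by metis
  qed
  note C = sublinear_gauge_body[of \<phi> M, OF \<phi>_nonneg \<phi>_bound \<open>M > 0\<close> \<phi>_add \<phi>_scale, of f]
  show ?thesis
  proof (rule that[OF \<sigma>(1) C(1,2)])
    show "(\<lambda>t. gauge_fn (transl (Bs (\<sigma> t)) f) r) \<longlonglongrightarrow> gauge_fn (transl {x. \<phi> (x - f) \<le> 1} f) r" for r
      using lim[of r] C(3)[of r] by (simp add: g_def)
  qed
qed

section \<open>The approximation factor\<close>

definition rho_admissible :: "real^'n \<Rightarrow> (real^'n) set set \<Rightarrow> (real^'n) set \<Rightarrow> real \<Rightarrow> bool" where
  "rho_admissible f \<B> L \<alpha> \<longleftrightarrow>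
     (\<forall>k R. k \<ge> 1 \<longrightarrow> CBfam \<B> k R f \<subseteq> scale_set (1 / \<alpha>) (CB L k R f))"

lemma rho_f_fam_eq_Inf_admissible:
  "rho_f_fam f \<B> L = Inf {ereal \<alpha> | \<alpha>. \<alpha> > 0 \<and> rho_admissible f \<B> L \<alpha>}"
  unfolding rho_f_fam_def rho_admissible_def ..

lemma CBfam_singleton: "CBfam {B} k R f = CB B k R f"
  by (auto simp: CBfam_def CB_def)

lemma rho_f_eq_rho_f_fam_singleton: "rho_f f B L = rho_f_fam f {B} L"
  unfolding rho_f_def rho_f_fam_def CBfam_singleton ..

lemma rho_f_fam_le_ereal:
  assumes "\<alpha> > 0" "rho_admissible f \<B> L \<alpha>"
  shows "rho_f_fam f \<B> L \<le> ereal \<alpha>"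
  unfolding rho_f_fam_eq_Inf_admissible by (rule Inf_lower) (use assms in auto)

lemma rho_f_fam_antimono:
  assumes "\<B>' \<subseteq> \<B>"
  shows "rho_f_fam f \<B> L \<le> rho_f_fam f \<B>' L"
proof -
  have "CBfam \<B> k R f \<subseteq> CBfam \<B>' k R f" for k R using assms by (auto simp: CBfam_def)
  hence "rho_admissible f \<B>' L \<alpha> \<Longrightarrow> rho_admissible f \<B> L \<alpha>" for \<alpha>
    unfolding rho_admissible_def by blast
  thus ?thesis unfolding rho_f_fam_eq_Inf_admissible by (intro Inf_superset_mono) blast
qed

lemma rho_f_fam_le_rho_f: "B \<in> \<B> \<Longrightarrow> rho_f_fam f \<B> L \<le> rho_f f B L"
  unfolding rho_f_eq_rho_f_fam_singleton by (rule rho_f_fam_antimono) simp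

lemma rho_f_nonneg: "0 \<le> rho_f f B L"
  unfolding rho_f_def by (rule Inf_greatest) auto

text \<open>Outside \<open>int L\<close> the cut \<open>C\<^sub>L(R,f)\<close> is the whole orthant, which explains the conditional
  hypothesis.\<close>

lemma rho_admissible_of_gauge_le:
  fixes C L :: "(real^'n) set"
  assumes "c > 0" "f \<in> interior L \<Longrightarrow>
      f \<in> interior C \<and> (\<forall>r. gauge_fn (transl C f) r \<le> c * gauge_fn (transl L f) r)"
  shows "rho_admissible f {C} L c"
  unfolding rho_admissible_def CBfam_singleton
proof (intro allI impI subsetI)
  fix k R s assume s: "s \<in> CB C k R f"
  have sn: "s \<in> nonneg_orthant k" using s by (auto simp: CB_def split: if_splits)
  define s' where "s' = (\<lambda>j. c * s j)"
  have s'n: "s' \<in> nonneg_orthant k" using sn assms(1) by (auto simp: nonneg_orthant_def s'_def)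
  have "s' \<in> CB L k R f"
  proof (cases "f \<in> interior L")
    case False thus ?thesis using s'n by (simp add: CB_def)
  next
    case True
    with assms(2) have fC: "f \<in> interior C"
      and le: "\<forall>r. gauge_fn (transl C f) r \<le> c * gauge_fn (transl L f) r" by auto
    have "1 \<le> (\<Sum>j<k. s j * gauge_fn (transl C f) (R j))" using s fC by (simp add: CB_def)
    also have "\<dots> \<le> (\<Sum>j<k. s' j * gauge_fn (transl L f) (R j))"
    proof (intro sum_mono)
      fix j assume "j \<in> {..<k}"
      hence "0 \<le> s j" using sn by (auto simp: nonneg_orthant_def)
      hence "s j * gauge_fn (transl C f) (R j) \<le> s j * (c * gauge_fn (transl L f) (R j))"
        using le by (intro mult_left_mono) auto
      thus "s j * gauge_fn (transl C f) (R j) \<le> s' j * gauge_fn (transl L f) (R j)"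
        by (simp add: s'_def algebra_simps)
    qed
    finally show ?thesis using True s'n by (simp add: CB_def)
  qed
  moreover have "s = (\<lambda>j. (1 / c) * s' j)" using assms(1) by (simp add: s'_def)
  ultimately show "s \<in> scale_set (1 / c) (CB L k R f)" unfolding scale_set_def by blast
qed

lemma rho_f_le_of_gauge_le:
  fixes C L :: "(real^'n) set"
  assumes "c > 0" "f \<in> interior L \<Longrightarrow>
      f \<in> interior C \<and> (\<forall>r. gauge_fn (transl C f) r \<le> c * gauge_fn (transl L f) r)"
  shows "rho_f f C L \<le> ereal c"
  unfolding rho_f_eq_rho_f_fam_singleton
  by (rule rho_f_fam_le_ereal[OF assms(1) rho_admissible_of_gauge_le[OF assms]])

lemma mem_CBfam_of_gauge_ge:
  assumes "s \<in> nonneg_orthant k"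
    and "\<And>B. B \<in> \<B> \<Longrightarrow> f \<in> interior B \<Longrightarrow> \<exists>j<k. 1 \<le> s j * gauge_fn (transl B f) (R j)"
  shows "s \<in> CBfam \<B> k R f"
proof -
  have "s \<in> CB B k R f" if B: "B \<in> \<B>" for B
  proof (cases "f \<in> interior B")
    case False thus ?thesis using assms(1) by (simp add: CB_def)
  next
    case True
    then obtain j where j: "j < k" "1 \<le> s j * gauge_fn (transl B f) (R j)" using assms(2)[OF B] by blast
    have "0 \<le> s i * gauge_fn (transl B f) (R i)" if "i < k" for i
      using assms(1) that gauge_fn_nonneg[OF zero_interior_transl[OF True]]
      by (auto simp: nonneg_orthant_def)
    hence "s j * gauge_fn (transl B f) (R j) \<le> (\<Sum>i<k. s i * gauge_fn (transl B f) (R i))"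
      using j by (intro member_le_sum) auto
    thus ?thesis using j True assms(1) by (simp add: CB_def)
  qed
  thus ?thesis using assms(1) by (simp add: CBfam_def)
qed

section \<open>The lower bound\<close>

lemma sum_gauge_polyhedral_rays_le:
  fixes R :: "nat \<Rightarrow> real^'n"
  assumes "finite W" "L = polyhedral_set V W" "f \<in> interior L" "p \<le> k"
    and "\<And>j. j < p \<Longrightarrow> R j + f \<in> V" "\<And>j. p \<le> j \<Longrightarrow> j < k \<Longrightarrow> R j \<in> W"
    and "\<And>j. j < p \<Longrightarrow> 0 \<le> s j \<and> s j \<le> c"
  shows "(\<Sum>j<k. s j * gauge_fn (transl L f) (R j)) \<le> real p * c"
proof -
  have "(\<Sum>j<k. s j * gauge_fn (transl L f) (R j)) \<le> (\<Sum>j<k. if j < p then c else 0)"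
  proof (intro sum_mono)
    fix j assume j: "j \<in> {..<k}"
    show "s j * gauge_fn (transl L f) (R j) \<le> (if j < p then c else 0)"
    proof (cases "j < p")
      case True
      hence "R j + f \<in> L" using assms(2,5) vertex_mem_polyhedral_set by blast
      hence "gauge_fn (transl L f) ((R j + f) - f) \<le> 1" by (rule gauge_fn_transl_le_one)
      hence "gauge_fn (transl L f) (R j) \<le> 1" by simp
      moreover have "0 \<le> gauge_fn (transl L f) (R j)"
        by (rule gauge_fn_nonneg[OF zero_interior_transl[OF assms(3)]])
      ultimately have "s j * gauge_fn (transl L f) (R j) \<le> s j"
        using assms(7)[OF True] by (simp add: mult_left_le)
      thus ?thesis using True assms(7)[OF True] by simp
    next
      case False
      hence "R j \<in> W" using j assms(6) by simp
      hence "gauge_fn (transl L f) (R j) = 0"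
        using gauge_fn_recession_zero[OF assms(1)] assms(2,3) by simp
      thus ?thesis using False by simp
    qed
  qed
  also have "\<dots> = (\<Sum>j\<in>{..<k} \<inter> {j. j < p}. c)" by (simp add: sum.If_cases)
  also have "{..<k} \<inter> {j. j < p} = {..<p}" using assms(4) by auto
  finally show ?thesis by simp
qed

text \<open>The test point puts weight \<open>1/(m\<alpha>)\<close> on the rays \<open>v - f\<close> and \<open>1/\<delta>\<close> on the rays \<open>w\<close>; if no
  \<open>B\<close> had the required gauges, it would lie in \<open>C\<^sub>\<B>(R,f)\<close>, whereas its \<open>\<alpha>\<close>-multiple has
  \<open>\<psi>\<^sub>L\<^sub>-\<^sub>f\<close>-weight at most \<open>|V|/m < 1\<close>.\<close>

lemma exists_body_small_gauges:
  fixes \<B> :: "(real^'n) set set"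
  assumes "finite V" "V \<noteq> {}" "finite W" "L = polyhedral_set V W" "f \<in> interior L"
    and "\<alpha> > 0" "rho_admissible f \<B> L \<alpha>" "\<delta> > 0"
  shows "\<exists>B\<in>\<B>. f \<in> interior B
    \<and> (\<forall>v\<in>V. gauge_fn (transl B f) (v - f) \<le> real (card V + card W + 1) * \<alpha>)
    \<and> (\<forall>w\<in>W. gauge_fn (transl B f) w \<le> \<delta>)"
proof (rule ccontr)
  define p where "p = card V"
  define q where "q = card W"
  define m where "m = real (card V + card W + 1)"
  have m: "m > 0" "m = real p + real q + 1" by (auto simp: m_def p_def q_def)
  assume "\<not> ?thesis"
  hence large: "\<And>B. B \<in> \<B> \<Longrightarrow> f \<in> interior B \<Longrightarrow>
     (\<exists>v\<in>V. gauge_fn (transl B f) (v - f) > m * \<alpha>) \<or> (\<exists>w\<in>W. gauge_fn (transl B f) w > \<delta>)"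
    unfolding m_def by (auto simp: not_le)
  obtain ev where ev: "bij_betw ev {0..<p} V" using ex_bij_betw_nat_finite[OF assms(1)] p_def by blast
  obtain ew where ew: "bij_betw ew {0..<q} W" using ex_bij_betw_nat_finite[OF assms(3)] q_def by blast
  define k where "k = p + q"
  define R where "R = (\<lambda>j. if j < p then ev j - f else ew (j - p))"
  define s where "s = (\<lambda>j. if j < p then 1 / (m * \<alpha>) else if j < k then 1 / \<delta> else 0)"
  have s: "s \<in> nonneg_orthant k" using m assms(6,8) by (auto simp: s_def k_def nonneg_orthant_def)
  have "s \<in> CBfam \<B> k R f"
  proof (rule mem_CBfam_of_gauge_ge[OF s])
    fix B assume "B \<in> \<B>" "f \<in> interior B"
    with large consider v where "v \<in> V" "gauge_fn (transl B f) (v - f) > m * \<alpha>"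
      | w where "w \<in> W" "gauge_fn (transl B f) w > \<delta>" by blast
    thus "\<exists>j<k. 1 \<le> s j * gauge_fn (transl B f) (R j)"
    proof cases
      case (1 v)
      then obtain j where j: "j < p" "v = ev j" using ev by (auto simp: bij_betw_def)
      have "1 \<le> gauge_fn (transl B f) (v - f) / (m * \<alpha>)"
        using 1(2) m(1) assms(6) by (simp add: le_divide_eq_1_pos)
      thus ?thesis using j by (intro exI[of _ j]) (simp add: s_def R_def k_def)
    next
      case (2 w)
      then obtain j where "j < q" "w = ew j" using ew by (auto simp: bij_betw_def)
      thus ?thesis using 2 assms(8)
        by (intro exI[of _ "p + j"]) (simp add: s_def R_def k_def field_simps)
    qed
  qed
  moreover have "k \<ge> 1" using assms(1,2) by (simp add: k_def p_def Suc_leI card_gt_0_iff)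
  ultimately have "s \<in> scale_set (1 / \<alpha>) (CB L k R f)"
    using assms(7) unfolding rho_admissible_def by blast
  then obtain s' where s': "s' \<in> CB L k R f" "s = (\<lambda>j. (1 / \<alpha>) * s' j)"
    unfolding scale_set_def by blast
  have s's: "s' j = \<alpha> * s j" for j using s'(2) assms(6) by (simp add: fun_eq_iff)
  have "1 \<le> (\<Sum>j<k. s' j * gauge_fn (transl L f) (R j))" using s'(1) assms(5) by (simp add: CB_def)
  also have "\<dots> \<le> real p * (1 / m)"
  proof (rule sum_gauge_polyhedral_rays_le[OF assms(3-5)])
    show "R j + f \<in> V" if "j < p" for j using that ev by (auto simp: R_def bij_betw_def)
    show "R j \<in> W" if "p \<le> j" "j < k" for j using that ew by (auto simp: R_def k_def bij_betw_def)
    show "0 \<le> s' j \<and> s' j \<le> 1 / m" if "j < p" for j using that assms(6) m by (simp add: s's s_def)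
  qed (simp add: k_def)
  also have "\<dots> < 1" using m by (simp add: field_simps)
  finally show False by simp
qed

lemma exists_body_rho_f_le:
  fixes \<B> :: "(real^'n) set set"
  assumes "\<B> \<subseteq> convex_bodies" "f_closed f \<B>"
    and "finite V" "V \<noteq> {}" "finite W" "L = polyhedral_set V W" "f \<in> interior L"
    and "\<alpha> > 0" "rho_admissible f \<B> L \<alpha>" "convex L"
  shows "\<exists>C\<in>\<B>. rho_f f C L \<le> ereal (real (card V + card W + 1) * \<alpha>)"
proof -
  define m where "m = real (card V + card W + 1)"
  have m\<alpha>: "m * \<alpha> > 0" using assms(8) by (simp add: m_def)
  have "\<forall>t. \<exists>B\<in>\<B>. f \<in> interior B \<and> (\<forall>v\<in>V. gauge_fn (transl B f) (v - f) \<le> m * \<alpha>)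
      \<and> (\<forall>w\<in>W. gauge_fn (transl B f) w \<le> inverse (real (Suc t)))"
    using exists_body_small_gauges[OF assms(3-9)] unfolding m_def by simp
  then obtain Bs where Bs: "\<And>t. Bs t \<in> \<B>" "\<And>t. f \<in> interior (Bs t)"
    "\<And>t v. v \<in> V \<Longrightarrow> gauge_fn (transl (Bs t) f) (v - f) \<le> m * \<alpha>"
    "\<And>t w. w \<in> W \<Longrightarrow> gauge_fn (transl (Bs t) f) w \<le> inverse (real (Suc t))"
    by metis
  have convex: "convex (Bs t)" for t using Bs(1) assms(1) by (auto simp: convex_bodies_def)
  obtain M where M: "M > 0" "\<And>S a r. convex S \<Longrightarrow> 0 \<in> interior S \<Longrightarrow> 0 \<le> a \<Longrightarrow>
      (\<forall>v\<in>V. gauge_fn S (v - f) \<le> a) \<Longrightarrow> (\<forall>w\<in>W. gauge_fn S w \<le> a) \<Longrightarrow>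
      gauge_fn S r \<le> a * M * norm r"
    using gauge_fn_le_norm_polyhedral[OF assms(3,5)] assms(6,7) by blast
  define a where "a = max (m * \<alpha>) 1"
  have bound: "gauge_fn (transl (Bs t) f) r \<le> (a * M) * norm r" for t r
  proof (rule M(2)[OF convex_transl[OF convex] zero_interior_transl[OF Bs(2)]])
    show "0 \<le> a" by (simp add: a_def)
    show "\<forall>v\<in>V. gauge_fn (transl (Bs t) f) (v - f) \<le> a" using Bs(3) by (simp add: a_def le_max_iff_disj)
    have "inverse (real (Suc t)) \<le> 1" by (simp add: inverse_le_1_iff)
    thus "\<forall>w\<in>W. gauge_fn (transl (Bs t) f) w \<le> a"
      using Bs(4)[of _ t] by (auto simp: a_def le_max_iff_disj intro: order_trans)
  qed
  have "a * M > 0" using M(1) by (simp add: a_def max_def)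
  then obtain \<sigma> C where C: "strict_mono \<sigma>" "C \<in> convex_bodies" "f \<in> interior C"
    "\<And>r. (\<lambda>t. gauge_fn (transl (Bs (\<sigma> t)) f) r) \<longlonglongrightarrow> gauge_fn (transl C f) r"
    using gauge_limit_body[where Bs = Bs, OF convex Bs(2) _ bound] by blast
  have "C \<in> \<B>"
    using assms(2)[unfolded f_closed_def, rule_format, of "Bs \<circ> \<sigma>" C] C(2-4) Bs(1,2) by simp
  moreover have "gauge_fn (transl C f) (v - f) \<le> m * \<alpha>" if "v \<in> V" for v
    by (rule LIMSEQ_le[OF C(4) tendsto_const]) (use Bs(3) that in auto)
  moreover have "gauge_fn (transl C f) w \<le> 0" if "w \<in> W" for w
  proof (rule LIMSEQ_le[OF C(4) LIMSEQ_inverse_real_of_nat])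
    have "inverse (real (Suc (\<sigma> t))) \<le> inverse (real (Suc t))" for t
      using seq_suble[OF C(1), of t] by (simp add: le_imp_inverse_le)
    thus "\<exists>N. \<forall>t\<ge>N. gauge_fn (transl (Bs (\<sigma> t)) f) w \<le> inverse (real (Suc t))"
      using Bs(4)[OF that] order_trans by blast
  qed
  ultimately have "gauge_fn (transl C f) r \<le> m * \<alpha> * gauge_fn (transl L f) r" for r
    using gauge_fn_le_mult_polyhedral[OF assms(3,5,6,10,7), of C "m * \<alpha>"]
      C(2,3) m\<alpha> by (auto simp: convex_bodies_def)
  hence "rho_f f C L \<le> ereal (m * \<alpha>)"
    using rho_f_le_of_gauge_le[OF m\<alpha>] C(3) by blast
  thus ?thesis using \<open>C \<in> \<B>\<close> unfolding m_def by blast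
qed

lemma scaled_INF_rho_f_le_rho_f_fam:
  fixes \<B> :: "(real^'n) set set"
  assumes "\<B> \<subseteq> convex_bodies" "f_closed f \<B>"
    and "finite V" "V \<noteq> {}" "finite W" "L = polyhedral_set V W" "convex L"
    and "f \<in> interior L \<or> \<B> \<noteq> {}"
  shows "ereal (1 / real (card V + card W + 1)) * (INF B\<in>\<B>. rho_f f B L) \<le> rho_f_fam f \<B> L"
  unfolding rho_f_fam_eq_Inf_admissible
proof (rule Inf_greatest, clarify)
  define m where "m = real (card V + card W + 1)"
  fix \<alpha> :: real assume \<alpha>: "\<alpha> > 0" "rho_admissible f \<B> L \<alpha>"
  have "\<exists>B\<in>\<B>. rho_f f B L \<le> ereal (m * \<alpha>)"
  proof (cases "f \<in> interior L")
    case True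
    thus ?thesis using exists_body_rho_f_le[OF assms(1-6) True \<alpha> assms(7)] by (simp add: m_def)
  next
    case False
    then obtain B where "B \<in> \<B>" using assms(8) by blast
    moreover have "rho_f f B L \<le> ereal (m * \<alpha>)"
      using rho_f_le_of_gauge_le[where c = "m * \<alpha>" and L = L and f = f and C = B] False \<alpha>(1)
      by (simp add: m_def)
    ultimately show ?thesis by blast
  qed
  hence "(INF B\<in>\<B>. rho_f f B L) \<le> ereal (m * \<alpha>)" by (meson INF_lower2)
  hence "ereal (1 / m) * (INF B\<in>\<B>. rho_f f B L) \<le> ereal (1 / m) * ereal (m * \<alpha>)"
    by (rule ereal_mult_left_mono) (simp add: m_def)
  also have "\<dots> = ereal \<alpha>" by (simp add: m_def)
  finally show "ereal (1 / real (card V + card W + 1)) * (INF B\<in>\<B>. rho_f f B L) \<le> ereal \<alpha>"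
    by (simp add: m_def)
qed

lemma interior_ex_not_int_point:
  fixes L :: "(real^'n) set"
  assumes "L \<in> convex_bodies"
  obtains f where "f \<in> interior L" "f \<notin> int_points"
proof -
  have "interior L \<noteq> {}"
    using assms rel_interior_eq_empty interior_rel_interior_gen[of L]
    by (force simp: convex_bodies_def)
  then obtain x e where e: "e > 0" "ball x e \<subseteq> interior L"
    using open_contains_ball_eq[OF open_interior] by blast
  define t where "t = min (e/2) (1/2)"
  have t: "0 < t" "t < 1" "t < e" using e by (auto simp: t_def)
  fix i :: 'n
  have "x + t *\<^sub>R axis i 1 \<in> interior L" using e t by (auto simp: dist_norm)
  moreover have "x \<notin> int_points \<or> x + t *\<^sub>R axis i 1 \<notin> int_points"
  proof (rule ccontr)
    assume "\<not> ?thesis"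
    hence "(x + t *\<^sub>R axis i 1) $ i - x $ i \<in> \<int>" unfolding int_points_def by (intro Ints_diff) blast+
    hence "t \<in> \<int>" by (simp add: axis_def)
    thus False using t by (auto elim: Ints_cases)
  qed
  moreover have "x \<in> interior L" using e centre_in_ball by blast
  ultimately show ?thesis using that by blast
qed

text \<open>When \<open>\<B> = {}\<close> both sides of the lower bound are \<open>\<infinity>\<close>, witnessed at any non-integral point of
  \<open>int L\<close>.\<close>

theorem corollary4p3:
  fixes \<B> :: "(real^'n) set set" and L :: "(real^'n) set"
    and V W :: "(real^'n) set"
  assumes "\<B> \<subseteq> convex_bodies"
    and "\<And>f. f \<notin> int_points \<Longrightarrow> f_closed f \<B>"
    and "L \<in> convex_bodies"
    and "finite V" and "V \<noteq> {}"
    and "finite W" and "0 \<notin> W"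
    and "L = {v + w | v w. v \<in> convex hull V \<and> w \<in> finite_cone W}"
  shows "ereal (1 / real (card V + card W + 1)) *
           (SUP f \<in> - int_points. (INF B \<in> \<B>. rho_f f B L)) \<le> rho_fam \<B> L
         \<and> rho_fam \<B> L \<le> (SUP f \<in> - int_points. (INF B \<in> \<B>. rho_f f B L))"
proof
  have L: "L = polyhedral_set V W" "convex L"
    using assms(3,8) by (simp_all add: polyhedral_set_def convex_bodies_def)
  note lower = scaled_INF_rho_f_le_rho_f_fam[OF assms(1,2) assms(4-6) L]
  obtain f0 where f0: "f0 \<in> interior L" "f0 \<notin> int_points" using interior_ex_not_int_point[OF assms(3)] .
  define c where "c = ereal (1 / real (card V + card W + 1))"
  show "c * (SUP f \<in> - int_points. (INF B \<in> \<B>. rho_f f B L)) \<le> rho_fam \<B> L"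
  proof (cases "\<B> = {}")
    case True
    have "(SUP f \<in> - int_points. (INF B \<in> \<B>. rho_f f B L)) = \<infinity>"
      using True f0(2) SUP_const[of "- int_points" \<infinity>] by (auto simp: top_ereal_def)
    moreover have "c * \<infinity> \<le> rho_f_fam f0 \<B> L"
      using lower[OF f0(2)] f0(1) True by (simp add: c_def top_ereal_def)
    moreover have "rho_f_fam f0 \<B> L \<le> rho_fam \<B> L"
      unfolding rho_fam_def using f0(2) by (intro SUP_upper) simp
    ultimately show ?thesis by simp
  next
    case False
    have "c * (SUP f \<in> - int_points. (INF B \<in> \<B>. rho_f f B L))
        = (SUP f \<in> - int_points. c * (INF B \<in> \<B>. rho_f f B L))"
      by (rule SUP_ereal_mult_left[symmetric]) (use f0 rho_f_nonneg in \<open>auto simp: c_def intro: INF_greatest\<close>)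
    also have "\<dots> \<le> rho_fam \<B> L"
      unfolding rho_fam_def c_def using lower False by (intro SUP_mono) auto
    finally show ?thesis .
  qed
  show "rho_fam \<B> L \<le> (SUP f \<in> - int_points. (INF B \<in> \<B>. rho_f f B L))"
    unfolding rho_fam_def by (intro SUP_mono INF_greatest bexI) (auto intro: rho_f_fam_le_rho_f)
qed

end
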